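(* Let $E$ and $F$ be disjoint finite sets, and let $S\subseteq 2^E$ and $T\subseteq 2^F$ be powerful sets. Define the direct sum $S\oplus T=\{X\cup Y : X\in S,\ Y\in T\}\subseteq 2^{E\cup F}$. Then $\mathcal{C}(S\oplus T)=\mathcal{C}(S)\cup\mathcal{C}(T)$.
   Context: For a finite set $E$, a set $S\subseteq 2^E$ is powerful if for every $X\subseteq E$ the number of members of $S$ that are subsets of $X$ is a power of $2$ (in particular $\emptyset\in S$). For a powerful set $S$, $\mathcal{C}(S)$ denotes the set of cocircuits of $S$, i.e. the minimal (under inclusion) nonempty members of $S$. *)

theory Defs
  imports Main
begin

definition powerful :: "'a set \<Rightarrow> 'a set set \<Rightarrow> bool" where
  "powerful E S \<longleftrightarrow> finite E \<and> S \<subseteq> Pow E \<and>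
     (\<forall>X. X \<subseteq> E \<longrightarrow> (\<exists>k::nat. card {A \<in> S. A \<subseteq> X} = 2 ^ k))"

definition cocircuits :: "'a set set \<Rightarrow> 'a set set" where
  "cocircuits S = {C \<in> S. C \<noteq> {} \<and> (\<forall>D \<in> S. D \<noteq> {} \<longrightarrow> D \<subseteq> C \<longrightarrow> D = C)}"

definition direct_sum :: "'a set set \<Rightarrow> 'a set set \<Rightarrow> 'a set set" where
  "direct_sum S T = {X \<union> Y | X Y. X \<in> S \<and> Y \<in> T}"

end

theory Submission
  imports Defs
begin

text \<open>Of powerfulness only \<open>{} \<in> S\<close> and \<open>{} \<in> T\<close> matter: they make \<open>S\<close> and \<open>T\<close> subfamilies
  of \<open>S \<oplus> T\<close>, so a minimal nonempty member \<open>X \<union> Y\<close> of the sum equals its nonempty part \<open>X\<close>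
  or \<open>Y\<close>. Conversely, a member \<open>X \<union> Y\<close> inside a cocircuit of \<open>S\<close> has \<open>Y = {}\<close> because the
  members of \<open>S\<close> and \<open>T\<close> are pairwise disjoint.\<close>

lemma empty_mem_if_powerful:
  assumes "powerful E S"
  shows "{} \<in> S"
proof -
  obtain k :: nat where "card {A \<in> S. A \<subseteq> {}} = 2 ^ k"
    using assms unfolding powerful_def by blast
  then have "{A \<in> S. A \<subseteq> {}} \<noteq> {}"
    by (metis card.empty power_not_zero zero_neq_numeral)
  then show ?thesis
    by auto
qed

lemma direct_sum_commute: "direct_sum S T = direct_sum T S"
  unfolding direct_sum_def by blast

lemma subset_direct_sum: "{} \<in> T \<Longrightarrow> S \<subseteq> direct_sum S T"
  unfolding direct_sum_def by blast

lemma cocircuits_subset_Int: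
  assumes "S \<subseteq> U"
  shows "cocircuits U \<inter> S \<subseteq> cocircuits S"
  using assms unfolding cocircuits_def by blast

lemma cocircuits_direct_sum_subset:
  assumes "{} \<in> S" and "{} \<in> T"
  shows "cocircuits (direct_sum S T) \<subseteq> cocircuits S \<union> cocircuits T"
proof
  fix C
  assume C: "C \<in> cocircuits (direct_sum S T)"
  then obtain X Y where C_eq: "C = X \<union> Y" and "X \<in> S" "Y \<in> T"
    unfolding cocircuits_def direct_sum_def by blast
  have S_sub: "S \<subseteq> direct_sum S T" and T_sub: "T \<subseteq> direct_sum S T"
    using assms subset_direct_sum direct_sum_commute by metis+
  have minimal: "D = C" if "D \<in> direct_sum S T" "D \<noteq> {}" "D \<subseteq> C" for D
    using C that unfolding cocircuits_def by blast
  show "C \<in> cocircuits S \<union> cocircuits T"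
  proof (cases "X = {}")
    case True
    then have "C \<in> T"
      using C_eq \<open>Y \<in> T\<close> by simp
    then show ?thesis
      using C cocircuits_subset_Int[OF T_sub] by blast
  next
    case False
    then have "C \<in> S"
      using minimal[of X] C_eq \<open>X \<in> S\<close> S_sub by blast
    then show ?thesis
      using C cocircuits_subset_Int[OF S_sub] by blast
  qed
qed

lemma cocircuits_subset_direct_sum:
  assumes "{} \<in> T" and disjoint: "\<And>X Y. X \<in> S \<Longrightarrow> Y \<in> T \<Longrightarrow> X \<inter> Y = {}"
  shows "cocircuits S \<subseteq> cocircuits (direct_sum S T)"
proof
  fix C
  assume C: "C \<in> cocircuits S"
  have "D = C" if "D \<in> direct_sum S T" "D \<noteq> {}" "D \<subseteq> C" for D
  proof -
    obtain X Y where D_eq: "D = X \<union> Y" and "X \<in> S" "Y \<in> T"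
      using \<open>D \<in> direct_sum S T\<close> unfolding direct_sum_def by blast
    have "Y = {}"
      using disjoint[of C Y] C \<open>Y \<in> T\<close> D_eq \<open>D \<subseteq> C\<close> unfolding cocircuits_def by blast
    then show "D = C"
      using C D_eq \<open>X \<in> S\<close> that unfolding cocircuits_def by auto
  qed
  moreover have "C \<in> direct_sum S T"
    using C subset_direct_sum[OF \<open>{} \<in> T\<close>] unfolding cocircuits_def by blast
  ultimately show "C \<in> cocircuits (direct_sum S T)"
    using C unfolding cocircuits_def by blast
qed

lemma cocircuits_direct_sum:
  assumes "{} \<in> S" and "{} \<in> T" and "\<And>X Y. X \<in> S \<Longrightarrow> Y \<in> T \<Longrightarrow> X \<inter> Y = {}"
  shows "cocircuits (direct_sum S T) = cocircuits S \<union> cocircuits T"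
proof -
  have "cocircuits T \<subseteq> cocircuits (direct_sum T S)"
    using assms by (intro cocircuits_subset_direct_sum) blast+
  then show ?thesis
    using assms cocircuits_direct_sum_subset cocircuits_subset_direct_sum direct_sum_commute
    by (metis Un_least subset_antisym)
qed

theorem theorem2:
  fixes E F :: "'a set" and S T :: "'a set set"
  assumes "finite E" and "finite F" and "E \<inter> F = {}"
    and "powerful E S" and "powerful F T"
  shows "cocircuits (direct_sum S T) = cocircuits S \<union> cocircuits T"
proof (rule cocircuits_direct_sum)
  show "{} \<in> S" "{} \<in> T"
    using assms(4,5) empty_mem_if_powerful by blast+
  have "S \<subseteq> Pow E" "T \<subseteq> Pow F"
    using assms(4,5) unfolding powerful_def by blast+
  then show "X \<inter> Y = {}" if "X \<in> S" "Y \<in> T" for X Y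
    using that \<open>E \<inter> F = {}\<close> by blast
qed

end
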